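(* Let $A,G\in\mathbb{R}^{d\times d}$ be symmetric positive definite, let $u\in\mathbb{R}^d\setminus\{0\}$, and let $G_+=\mathrm{BFGS}(A,G,u)$. Let $\xi\ge1$ be a constant such that $\frac1\xi A\preceq G$ and $\theta(A,G,u)\le\xi$. Then $$\sigma(A,G)-\sigma(A,G_+)\ge\frac{1}{4\xi^2}\theta^2(A,G,u)-\ln\xi.$$
   Context: $\mathrm{BFGS}(A,G,u):=G-\frac{Guu^\top G}{u^\top Gu}+\frac{Auu^\top A}{u^\top Au}$; $\sigma(A,G):=\mathrm{Tr}(A^{-1}G)-d$; $\theta(A,G,u):=\left(\frac{u^\top (G-A)A^{-1}(G-A)u}{u^\top GA^{-1}Gu}\right)^{1/2}$. *)

theory Defs
  imports "HOL-Analysis.Analysis"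
begin

definition sym_pos_def :: "real^'n^'n \<Rightarrow> bool" where
  "sym_pos_def A \<longleftrightarrow> transpose A = A \<and> (\<forall>x. x \<noteq> 0 \<longrightarrow> 0 < x \<bullet> (A *v x))"

definition loewner_le :: "real^'n^'n \<Rightarrow> real^'n^'n \<Rightarrow> bool" where
  "loewner_le A B \<longleftrightarrow> (\<forall>x. 0 \<le> x \<bullet> ((B - A) *v x))"

definition outer_prod :: "real^'n \<Rightarrow> real^'n \<Rightarrow> real^'n^'n" where
  "outer_prod x y = (\<chi> i j. x $ i * y $ j)"

definition BFGS :: "real^'n^'n \<Rightarrow> real^'n^'n \<Rightarrow> real^'n \<Rightarrow> real^'n^'n" where
  "BFGS A G u = G - (1 / (u \<bullet> (G *v u))) *\<^sub>R (G ** outer_prod u u ** G)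
                  + (1 / (u \<bullet> (A *v u))) *\<^sub>R (A ** outer_prod u u ** A)"

definition sigma :: "real^'n^'n \<Rightarrow> real^'n^'n \<Rightarrow> real" where
  "sigma A G = trace (matrix_inv A ** G) - real CARD('n)"

definition theta :: "real^'n^'n \<Rightarrow> real^'n^'n \<Rightarrow> real^'n \<Rightarrow> real" where
  "theta A G u = sqrt ((u \<bullet> (((G - A) ** matrix_inv A ** (G - A)) *v u))
                      / (u \<bullet> ((G ** matrix_inv A ** G) *v u)))"

end

theory Submission
  imports Defs
begin

text \<open>
  Write \<open>a = u\<^sup>T G A\<^sup>-\<^sup>1 G u\<close>, \<open>b = u\<^sup>T G u\<close> and \<open>c = u\<^sup>T A u\<close>. Since the BFGS correction
  consists of two rank-one terms, \<open>\<sigma>(A,G) - \<sigma>(A,G\<^sub>+) = a/b - 1\<close>, while expanding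
  \<open>(G - A) A\<^sup>-\<^sup>1 (G - A)\<close> gives \<open>\<theta>\<^sup>2 = (a - 2b + c)/a\<close>. Cauchy-Schwarz for the inner product
  defined by \<open>A\<close> gives \<open>b\<^sup>2 \<le> ac\<close>, and the Loewner hypothesis gives \<open>c \<le> \<xi> b\<close>. In terms of
  \<open>t = b/a \<le> \<xi>\<close> the claim becomes a one-variable inequality, which reduces at \<open>t = \<xi>\<close> to
  \<open>ln \<xi> \<ge> (1 - 1/\<xi>) + (1 - 1/\<xi>)\<^sup>2/4\<close>.
\<close>

lemma ln_ge_quadratic_lower_bound:
  fixes x :: real
  assumes "1 \<le> x"
  shows "(1 - 1/x) + (1 - 1/x)^2 / 4 \<le> ln x"
proof -
  let ?f = "\<lambda>x::real. ln x - (1 - 1/x) - (1 - 1/x)^2 / 4"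
  have "?f 1 \<le> ?f x"
  proof (rule DERIV_nonneg_imp_increasing_open[OF assms])
    fix t :: real assume t: "1 < t" "t < x"
    have "DERIV ?f t :> (t - 1) * (2*t - 1) / (2 * t^3)"
      using t by (auto intro!: derivative_eq_intros simp: field_simps power2_eq_square power3_eq_cube)
    moreover have "0 \<le> (t - 1) * (2*t - 1) / (2 * t^3)"
      using t by simp
    ultimately show "\<exists>y. DERIV ?f t :> y \<and> 0 \<le> y" by blast
  qed (intro continuous_intros; auto)
  then show ?thesis by simp
qed

lemma bfgs_scalar_bound_ratio:
  fixes t \<xi> :: real
  assumes "0 < t" "t \<le> \<xi>" "1 \<le> \<xi>"
  shows "(1 + (\<xi> - 2) * t) / (4 * \<xi>^2) \<le> 1/t - 1 + ln \<xi>"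
proof -
  have "(\<xi> - t) * (1 / (t * \<xi>) + (\<xi> - 2) / (4 * \<xi>^2)) \<ge> 0"
  proof (rule mult_nonneg_nonneg)
    have "1 / (\<xi> * \<xi>) \<le> 1 / (t * \<xi>)"
      using assms by (intro divide_left_mono mult_right_mono) auto
    moreover have "0 \<le> 1 / (\<xi> * \<xi>) + (\<xi> - 2) / (4 * \<xi>^2)"
      using assms by (simp add: field_simps power2_eq_square)
    ultimately show "0 \<le> 1 / (t * \<xi>) + (\<xi> - 2) / (4 * \<xi>^2)" by linarith
  qed (use assms in simp)
  moreover have "(1 + (\<xi> - 2) * t) / (4 * \<xi>^2)
      = (1 - 1/\<xi>)^2 / 4 + (1/t - 1/\<xi>) - (\<xi> - t) * (1 / (t * \<xi>) + (\<xi> - 2) / (4 * \<xi>^2))"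
    using assms by (simp add: field_simps power2_eq_square)
  moreover have "(1 - 1/\<xi>)^2 / 4 \<le> ln \<xi> - (1 - 1/\<xi>)"
    using ln_ge_quadratic_lower_bound[OF assms(3)] by simp
  ultimately show ?thesis by linarith
qed

lemma sq_le_mult_imp_two_mult_le_add:
  fixes a b c :: real
  assumes "0 \<le> a" "0 \<le> c" "b^2 \<le> a * c"
  shows "2 * b \<le> a + c"
proof -
  have "(a + c)^2 - (2 * b)^2 = (a - c)^2 + 4 * (a * c - b^2)"
    by (simp add: power2_eq_square algebra_simps)
  also have "\<dots> \<ge> 0"
    using assms(3) by simp
  finally have "(2 * b)^2 \<le> (a + c)^2"
    by simp
  then show ?thesis
    using add_nonneg_nonneg[OF assms(1,2)] by (rule power2_le_imp_le)
qed

lemma bfgs_scalar_bound: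
  fixes a b c \<xi> :: real
  assumes "0 < a" "0 < b" "1 \<le> \<xi>" "b^2 \<le> a * c" "c \<le> \<xi> * b"
  shows "(1 / (4 * \<xi>^2)) * ((a - 2*b + c) / a) - ln \<xi> \<le> a/b - 1"
proof -
  define t where "t = b / a"
  have "0 < t"
    using assms(1,2) by (simp add: t_def)
  have "a * c \<le> a * (\<xi> * b)"
    using assms(1,5) by simp
  then have "b * b \<le> a * (\<xi> * b)"
    using assms(4) unfolding power2_eq_square by linarith
  then have "t \<le> \<xi>"
    using assms(1,2) by (simp add: t_def field_simps)
  have "(a - 2*b + c) / a \<le> 1 + (\<xi> - 2) * t"
    using assms by (simp add: t_def field_simps)
  then have "((a - 2*b + c) / a) / (4 * \<xi>^2) \<le> (1 + (\<xi> - 2) * t) / (4 * \<xi>^2)"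
    by (rule divide_right_mono) simp
  also have "\<dots> \<le> 1/t - 1 + ln \<xi>"
    using \<open>0 < t\<close> \<open>t \<le> \<xi>\<close> assms(3) by (rule bfgs_scalar_bound_ratio)
  also have "1/t = a/b"
    by (simp add: t_def)
  finally show ?thesis
    by (simp add: ac_simps)
qed

lemma inner_matrix_vector_commute:
  fixes A :: "real^'n^'n"
  assumes "transpose A = A"
  shows "x \<bullet> (A *v y) = y \<bullet> (A *v x)"
  by (metis assms dot_lmul_matrix inner_commute transpose_transpose vector_transpose_matrix)

lemma sym_pos_def_invertible:
  fixes A :: "real^'n^'n"
  assumes "sym_pos_def A"
  shows "invertible A"
proof -
  have "\<forall>x. A *v x = 0 \<longrightarrow> x = 0"
    using assms unfolding sym_pos_def_def by force
  then show ?thesis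
    unfolding invertible_left_inverse matrix_left_invertible_ker .
qed

lemma sym_pos_def_cauchy_schwarz:
  fixes A :: "real^'n^'n"
  assumes "sym_pos_def A"
  shows "(x \<bullet> (A *v y))^2 \<le> (x \<bullet> (A *v x)) * (y \<bullet> (A *v y))"
proof (cases "y = 0")
  case False
  have sym: "transpose A = A" and pos: "\<And>z. z \<noteq> 0 \<Longrightarrow> 0 < z \<bullet> (A *v z)"
    using assms unfolding sym_pos_def_def by auto
  define r where "r = (x \<bullet> (A *v y)) / (y \<bullet> (A *v y))"
  have pos_y: "0 < y \<bullet> (A *v y)"
    using pos False by blast
  have "0 \<le> (x - r *\<^sub>R y) \<bullet> (A *v (x - r *\<^sub>R y))"
    using pos by (cases "x - r *\<^sub>R y = 0") (auto intro: less_imp_le)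
  also have "\<dots> = x \<bullet> (A *v x) - 2 * r * (x \<bullet> (A *v y)) + r^2 * (y \<bullet> (A *v y))"
    using inner_matrix_vector_commute[OF sym, of y x]
    by (simp add: matrix_vector_mult_diff_distrib inner_diff_left inner_diff_right
        power2_eq_square algebra_simps)
  also have "\<dots> = x \<bullet> (A *v x) - (x \<bullet> (A *v y))^2 / (y \<bullet> (A *v y))"
    using pos_y by (simp add: r_def power2_eq_square field_simps)
  finally show ?thesis
    using pos_y by (simp add: pos_divide_le_eq)
qed simp

lemma loewner_le_quadratic_form:
  assumes "loewner_le A B"
  shows "x \<bullet> (A *v x) \<le> x \<bullet> (B *v x)"
  using assms unfolding loewner_le_def
  by (metis diff_ge_0_iff_ge inner_diff_right matrix_vector_mult_diff_rdistrib)

lemma loewner_le_scaled_quadratic_form: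
  assumes "loewner_le ((1 / \<xi>) *\<^sub>R A) B" "0 < \<xi>"
  shows "x \<bullet> (A *v x) \<le> \<xi> * (x \<bullet> (B *v x))"
  using loewner_le_quadratic_form[OF assms(1), of x] assms(2)
  by (simp add: scaleR_matrix_vector_assoc[symmetric] field_simps)

lemma matrix_inv_right:
  fixes A :: "'a::semiring_1^'n^'n"
  assumes "invertible A"
  shows "A ** matrix_inv A = mat 1"
  using someI_ex[OF assms[unfolded invertible_def]] unfolding matrix_inv_def by blast

lemma matrix_inv_left:
  fixes A :: "'a::semiring_1^'n^'n"
  assumes "invertible A"
  shows "matrix_inv A ** A = mat 1"
  using someI_ex[OF assms[unfolded invertible_def]] unfolding matrix_inv_def by blast

lemma matrix_diff_ldistrib: "(X::'a::ring_1^'n^'m) ** (Y - Z) = X ** Y - X ** Z"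
  by (simp add: matrix_matrix_mult_def vec_eq_iff sum_subtractf right_diff_distrib)

lemma matrix_diff_rdistrib: "((Y::'a::ring_1^'n^'m) - Z) ** X = Y ** X - Z ** X"
  by (simp add: matrix_matrix_mult_def vec_eq_iff sum_subtractf left_diff_distrib)

lemma matrix_scaleR_right: "(X::real^'n^'m) ** (k *\<^sub>R Y) = k *\<^sub>R (X ** Y)"
  by (simp add: matrix_matrix_mult_def vec_eq_iff sum_distrib_left mult_ac)

lemma trace_scaleR: "trace (k *\<^sub>R (M::real^'n^'n)) = k * trace M"
  by (simp add: trace_def sum_distrib_left)

lemma trace_mult_outer_prod: "trace ((M::real^'n^'n) ** outer_prod u u) = u \<bullet> (M *v u)"
  unfolding trace_def outer_prod_def matrix_matrix_mult_def matrix_vector_mult_def inner_vec_def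
  by (simp add: sum_distrib_left mult_ac)

lemma trace_mult_sandwich_outer_prod:
  "trace ((X::real^'n^'n) ** (P ** outer_prod u u ** Q)) = u \<bullet> ((Q ** X ** P) *v u)"
proof -
  have "trace (X ** (P ** outer_prod u u ** Q)) = trace ((X ** P ** outer_prod u u) ** Q)"
    by (simp add: matrix_mul_assoc)
  also have "\<dots> = trace (Q ** (X ** P ** outer_prod u u))"
    by (rule trace_mul_sym)
  finally show ?thesis
    by (simp add: matrix_mul_assoc trace_mult_outer_prod)
qed

lemma diff_matrix_inv_diff:
  fixes A G :: "real^'n^'n"
  assumes "invertible A"
  shows "(G - A) ** matrix_inv A ** (G - A) = G ** matrix_inv A ** G - G - G + A"
proof -
  have "(G - A) ** matrix_inv A = G ** matrix_inv A - mat 1"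
    by (simp add: matrix_diff_rdistrib matrix_inv_right[OF assms])
  moreover have "G ** matrix_inv A ** A = G"
    by (simp add: matrix_mul_assoc[symmetric] matrix_inv_left[OF assms])
  ultimately show ?thesis
    by (simp add: matrix_diff_rdistrib matrix_diff_ldistrib)
qed

lemma sym_pos_def_cauchy_schwarz_matrix_inv:
  fixes A G :: "real^'n^'n"
  assumes "sym_pos_def A" "transpose G = G"
  shows "(u \<bullet> (G *v u))^2 \<le> (u \<bullet> ((G ** matrix_inv A ** G) *v u)) * (u \<bullet> (A *v u))"
proof -
  define w where "w = matrix_inv A *v (G *v u)"
  have "A *v w = G *v u"
    using matrix_inv_right[OF sym_pos_def_invertible[OF assms(1)]]
    by (simp add: w_def matrix_vector_mul_assoc matrix_mul_assoc)
  moreover have "w \<bullet> (G *v u) = u \<bullet> ((G ** matrix_inv A ** G) *v u)"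
    using inner_matrix_vector_commute[OF assms(2), of u w]
    by (simp add: w_def matrix_vector_mul_assoc matrix_mul_assoc)
  ultimately show ?thesis
    using sym_pos_def_cauchy_schwarz[OF assms(1), of u w] by (simp add: mult.commute)
qed

lemma sigma_minus_sigma_BFGS:
  fixes A G :: "real^'n^'n"
  assumes "invertible A" "u \<bullet> (A *v u) \<noteq> 0"
  shows "sigma A G - sigma A (BFGS A G u)
           = u \<bullet> ((G ** matrix_inv A ** G) *v u) / (u \<bullet> (G *v u)) - 1"
proof -
  let ?Ai = "matrix_inv A"
  have "trace (?Ai ** BFGS A G u)
          = trace (?Ai ** G) - u \<bullet> ((G ** ?Ai ** G) *v u) / (u \<bullet> (G *v u))
            + u \<bullet> ((A ** ?Ai ** A) *v u) / (u \<bullet> (A *v u))"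
    unfolding BFGS_def
    by (simp add: matrix_add_ldistrib matrix_diff_ldistrib matrix_scaleR_right
        trace_add trace_sub trace_scaleR trace_mult_sandwich_outer_prod)
  moreover have "A ** ?Ai ** A = A"
    using matrix_inv_right[OF assms(1)] by simp
  ultimately show ?thesis
    using assms(2) unfolding sigma_def by simp
qed

lemma theta_squared:
  fixes A G :: "real^'n^'n" and u :: "real^'n"
  defines "a \<equiv> u \<bullet> ((G ** matrix_inv A ** G) *v u)"
    and "b \<equiv> u \<bullet> (G *v u)" and "c \<equiv> u \<bullet> (A *v u)"
  assumes "invertible A" "0 \<le> a" "2 * b \<le> a + c"
  shows "(theta A G u)^2 = (a - 2*b + c) / a"
proof -
  have "u \<bullet> (((G - A) ** matrix_inv A ** (G - A)) *v u) = a - 2*b + c"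
    unfolding diff_matrix_inv_diff[OF assms(4)] a_def b_def c_def
    by (simp only: matrix_vector_mult_diff_rdistrib matrix_vector_mult_add_rdistrib
        inner_diff_right inner_add_right)
  moreover have "0 \<le> (a - 2*b + c) / a"
    using assms(5,6) by simp
  ultimately show ?thesis
    unfolding theta_def a_def[symmetric] by simp
qed

theorem lemma7:
  fixes A G :: "real^'n^'n" and u :: "real^'n" and \<xi> :: real
  assumes "sym_pos_def A" and "sym_pos_def G" and "u \<noteq> 0"
    and "\<xi> \<ge> 1"
    and "loewner_le ((1 / \<xi>) *\<^sub>R A) G"
    and "theta A G u \<le> \<xi>"
  shows "sigma A G - sigma A (BFGS A G u) \<ge> (1 / (4 * \<xi>^2)) * (theta A G u)^2 - ln \<xi>"
proof -
  have invA: "invertible A"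
    using assms(1) by (rule sym_pos_def_invertible)
  have symG: "transpose G = G"
    using assms(2) unfolding sym_pos_def_def by simp
  define a where "a = u \<bullet> ((G ** matrix_inv A ** G) *v u)"
  define b where "b = u \<bullet> (G *v u)"
  define c where "c = u \<bullet> (A *v u)"
  have "0 < b" "0 < c"
    using assms(1-3) unfolding sym_pos_def_def b_def c_def by auto
  have cs: "b^2 \<le> a * c"
    unfolding a_def b_def c_def using assms(1) symG by (rule sym_pos_def_cauchy_schwarz_matrix_inv)
  then have "0 < a * c"
    using \<open>0 < b\<close> by (meson less_le_trans zero_less_power)
  then have "0 < a"
    using \<open>0 < c\<close> by (simp add: zero_less_mult_iff)
  have "2 * b \<le> a + c"
    using less_imp_le[OF \<open>0 < a\<close>] less_imp_le[OF \<open>0 < c\<close>] cs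
    by (rule sq_le_mult_imp_two_mult_le_add)
  with \<open>0 < a\<close> have "(theta A G u)^2 = (a - 2*b + c) / a"
    unfolding a_def b_def c_def by (intro theta_squared[OF invA]) simp_all
  moreover have "sigma A G - sigma A (BFGS A G u) = a/b - 1"
    unfolding a_def b_def using \<open>0 < c\<close> c_def by (intro sigma_minus_sigma_BFGS[OF invA]) simp
  moreover have "c \<le> \<xi> * b"
    unfolding b_def c_def using assms(4) by (intro loewner_le_scaled_quadratic_form[OF assms(5)]) simp
  ultimately show ?thesis
    using bfgs_scalar_bound[OF \<open>0 < a\<close> \<open>0 < b\<close> assms(4) cs] by simp
qed

end
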